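(* For every integer $n>1$, \[ \omega(n-1)=\sum_{\substack{m+k=n\\ m\ge1,\ k\ge0}}\mu(m)\,\Omega_m(k), \] where $\mu$ is the Möbius function.
   Context: $\omega:\mathbb{Z}\to\mathbb{Z}$ is defined by $\omega(0)=1$; $\omega(m)=(-1)^j$ if $m=\frac{3j^2\pm j}{2}$ for some integer $j\ge1$; $\omega(m)=0$ otherwise (in particular for $m<0$). For $m\ge1$ and integer $k$, $\Omega_m(k)=\sum_{j\ge0}\omega(k-jm)=\omega(k)+\omega(k-m)+\omega(k-2m)+\cdots$. *)

theory Defs
  imports "HOL-Computational_Algebra.Computational_Algebra"
begin

text \<open>Pentagonal-number coefficient: omega 0 = 1; omega m = (-1)^j if m = (3j^2 +- j)/2
  for some integer j >= 1 (such j is unique); omega m = 0 otherwise.\<close>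
definition pent_omega :: "int \<Rightarrow> int" where
  "pent_omega m =
     (if m = 0 then 1
      else if \<exists>j::nat. j \<ge> 1 \<and> (2 * m = 3 * int j ^ 2 + int j \<or> 2 * m = 3 * int j ^ 2 - int j)
      then (-1) ^ (THE j::nat. j \<ge> 1 \<and> (2 * m = 3 * int j ^ 2 + int j \<or> 2 * m = 3 * int j ^ 2 - int j))
      else 0)"

text \<open>Omega_m(k) = sum_{j>=0} omega(k - j m); only finitely many terms (those with k - j m >= 0)
  can be nonzero, as omega vanishes on negative integers.\<close>
definition Omega :: "nat \<Rightarrow> int \<Rightarrow> int" where
  "Omega m k = (\<Sum>j\<in>{j::nat. int j * int m \<le> k}. pent_omega (k - int j * int m))"

definition moebius_mu :: "nat \<Rightarrow> int" where
  "moebius_mu n = (if squarefree n then (-1) ^ card (prime_factors n) else 0)"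

end

theory Submission
  imports Defs
begin

text \<open>\<open>\<Omega>\<^sub>m(n - m)\<close> is the sum of \<open>\<omega>(n - d)\<close> over the multiples \<open>d \<le> n\<close> of \<open>m\<close>.
  Exchanging the two sums turns the right-hand side into the sum over \<open>d \<le> n\<close> of \<open>\<omega>(n - d)\<close>
  times the divisor sum of \<open>\<mu>\<close>, which vanishes except at \<open>d = 1\<close>.
  No property of \<open>\<omega>\<close> is used.\<close>

lemma moebius_mu_mult_prime:
  assumes p: "prime (p::nat)"
  shows "moebius_mu (k * p) = (if p dvd k then 0 else - moebius_mu k)"
proof (cases "p dvd k")
  case True
  then have "p^2 dvd k * p" by (auto simp: power2_eq_square)
  moreover have "\<not> p dvd 1" using prime_gt_1_nat[OF p] by simp
  ultimately have "\<not> squarefree (k * p)" using not_squarefreeI by blast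
  then show ?thesis using True by (simp add: moebius_mu_def)
next
  case False
  then have "k > 0" by (rule contrapos_np) simp
  have "coprime k p" using False p by (metis coprime_commute prime_imp_coprime)
  then have squarefree_iff: "squarefree (k * p) \<longleftrightarrow> squarefree k"
    using squarefree_mult_coprime squarefree_prime[OF p] squarefree_multD(1) by blast
  have "prime_factors (k * p) = insert p (prime_factors k)"
    using \<open>k > 0\<close> p by (simp add: prime_factors_product prime_prime_factors)
  moreover have "p \<notin> prime_factors k" using False by auto
  ultimately have "card (prime_factors (k * p)) = Suc (card (prime_factors k))"
    by simp
  then show ?thesis using False squarefree_iff by (simp add: moebius_mu_def)
qed

lemma sum_moebius_mu_divisors:
  assumes "d > (0::nat)"
  shows "(\<Sum>m | m dvd d. moebius_mu m) = (if d = 1 then 1 else 0)"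
proof (cases "d = 1")
  case True
  then show ?thesis by (simp add: moebius_mu_def)
next
  case False
  then obtain p where p: "prime p" "p dvd d"
    using assms prime_factor_nat by (metis less_irrefl)
  define e where "e = d div p"
  have d_eq: "d = e * p" using p e_def by simp
  have "e > 0" using assms d_eq by (cases e) auto
  have coprime_divisors: "{m. m dvd d \<and> \<not> p dvd m} = {k. k dvd e \<and> \<not> p dvd k}"
  proof safe
    fix m assume "m dvd d" "\<not> p dvd m"
    then have "coprime m p" using p by (metis coprime_commute prime_imp_coprime)
    then show "m dvd e" using \<open>m dvd d\<close> d_eq by (metis coprime_dvd_mult_left_iff)
  next
    fix k assume "k dvd e" then show "k dvd d" using d_eq by simp
  qed
  have multiples_image: "{m. m dvd d \<and> p dvd m} = (\<lambda>k. k * p) ` {k. k dvd e}"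
    using p d_eq by (auto elim!: dvdE simp: image_iff mult.commute)
  have "inj (\<lambda>k. k * p)"
    using p by (auto simp: inj_on_def prime_gt_0_nat)
  then have "(\<Sum>m | m dvd d \<and> p dvd m. moebius_mu m) = (\<Sum>k | k dvd e. moebius_mu (k * p))"
    by (simp add: multiples_image sum.reindex inj_on_subset)
  also have "\<dots> = (\<Sum>k | k dvd e. if p dvd k then 0 else - moebius_mu k)"
    by (rule sum.cong) (use p in \<open>simp_all add: moebius_mu_mult_prime\<close>)
  also have "\<dots> = - (\<Sum>m | m dvd d \<and> \<not> p dvd m. moebius_mu m)"
    using \<open>e > 0\<close> by (simp add: coprime_divisors sum.If_cases sum_negf Int_def conj_commute)
  finally have multiples_sum:
    "(\<Sum>m | m dvd d \<and> p dvd m. moebius_mu m) = - (\<Sum>m | m dvd d \<and> \<not> p dvd m. moebius_mu m)" .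
  have divisors_split: "{m. m dvd d} = {m. m dvd d \<and> \<not> p dvd m} \<union> {m. m dvd d \<and> p dvd m}"
    by auto
  have "(\<Sum>m | m dvd d. moebius_mu m)
      = (\<Sum>m | m dvd d \<and> \<not> p dvd m. moebius_mu m) + (\<Sum>m | m dvd d \<and> p dvd m. moebius_mu m)"
    by (subst divisors_split, rule sum.union_disjoint) (use assms in auto)
  then show ?thesis using multiples_sum False by simp
qed

lemma sum_moebius_mu_times_sum_multiples:
  fixes g :: "nat \<Rightarrow> int"
  assumes "n \<ge> 1"
  shows "(\<Sum>m\<in>{1..n}. moebius_mu m * (\<Sum>d | d \<in> {1..n} \<and> m dvd d. g d)) = g 1"
proof -
  have "(\<Sum>m\<in>{1..n}. moebius_mu m * (\<Sum>d | d \<in> {1..n} \<and> m dvd d. g d))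
      = (\<Sum>m\<in>{1..n}. \<Sum>d\<in>{d\<in>{1..n}. m dvd d}. moebius_mu m * g d)"
    by (simp add: sum_distrib_left)
  also have "\<dots> = (\<Sum>d\<in>{1..n}. \<Sum>m\<in>{m\<in>{1..n}. m dvd d}. moebius_mu m * g d)"
    by (rule sum.swap_restrict) auto
  also have "\<dots> = (\<Sum>d\<in>{1..n}. g d * (\<Sum>m | m dvd d. moebius_mu m))"
  proof (rule sum.cong)
    fix d assume d: "d \<in> {1..n}"
    then have "{m\<in>{1..n}. m dvd d} = {m. m dvd d}"
      by (auto dest: dvd_imp_le intro: Nat.gr0I)
    then show "(\<Sum>m\<in>{m\<in>{1..n}. m dvd d}. moebius_mu m * g d) = g d * (\<Sum>m | m dvd d. moebius_mu m)"
      by (simp add: sum_distrib_left mult.commute)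
  qed simp
  also have "\<dots> = (\<Sum>d\<in>{1..n}. if d = 1 then g d else 0)"
    by (rule sum.cong) (auto simp: sum_moebius_mu_divisors)
  also have "\<dots> = g 1"
    using assms by (simp add: sum.delta)
  finally show ?thesis .
qed

lemma Omega_eq_sum_multiples:
  assumes m: "m \<in> {1..n}"
  shows "Omega m (int (n - m)) = (\<Sum>d | d \<in> {1..n} \<and> m dvd d. pent_omega (int n - int d))"
  unfolding Omega_def
proof (rule sum.reindex_bij_witness[where i = "\<lambda>d. d div m - 1" and j = "\<lambda>j. (j + 1) * m"])
  fix j assume "j \<in> {j. int j * int m \<le> int (n - m)}"
  then show "(j + 1) * m div m - 1 = j" "(j + 1) * m \<in> {d. d \<in> {1..n} \<and> m dvd d}"
    "pent_omega (int n - int ((j + 1) * m)) = pent_omega (int (n - m) - int j * int m)"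
    using m by (auto simp: algebra_simps of_nat_diff simp flip: of_nat_mult)
next
  fix d assume d: "d \<in> {d. d \<in> {1..n} \<and> m dvd d}"
  then obtain q where q: "d = m * q" by auto
  have "q \<ge> 1" using d q by (cases q) auto
  then show "(d div m - 1 + 1) * m = d" "d div m - 1 \<in> {j. int j * int m \<le> int (n - m)}"
    using d q m by (auto simp: algebra_simps of_nat_diff simp flip: of_nat_mult)
qed

theorem mainTheorem7:
  fixes n :: nat
  assumes "n > 1"
  shows "pent_omega (int n - 1) = (\<Sum>m\<in>{1..n}. moebius_mu m * Omega m (int (n - m)))"
proof -
  have "(\<Sum>m\<in>{1..n}. moebius_mu m * Omega m (int (n - m)))
      = (\<Sum>m\<in>{1..n}. moebius_mu m * (\<Sum>d | d \<in> {1..n} \<and> m dvd d. pent_omega (int n - int d)))"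
    by (rule sum.cong) (simp_all only: Omega_eq_sum_multiples)
  also have "\<dots> = pent_omega (int n - 1)"
    using assms by (subst sum_moebius_mu_times_sum_multiples) simp_all
  finally show ?thesis ..
qed

end
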